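(* For any $C>1$, any odd $d\ge3$, and any $\eta\ge2$, there exists a forward-KL-regularized linear bandit instance of dimension $d$ such that $C^{\pi^*}=O(C)$ and $D^2_{\pi^*}=\Omega(Cd)$; consequently $D^2_{\pi^*}=\Omega(d\,C^{\pi^*})$.
   Context: A forward-KL-regularized linear bandit instance (single context) consists of a finite action set $\mathcal A$, a feature map $\phi:\mathcal A\to\mathbb R^d$, a parameter set $\Theta\subset\mathbb R^d$ defining the function class $\mathcal F=\{a\mapsto\langle\theta,\phi(a)\rangle:\theta\in\Theta\}$, a true parameter $\theta^*\in\Theta$ with mean reward $r(a)=\langle\theta^*,\phi(a)\rangle\in[0,1]$, a reference policy $\pi^{\mathrm{ref}}\in\Delta(\mathcal A)$ with full support, and $\eta>0$. The optimal policy is $\pi^*=\arg\max_{\pi\in\Delta(\mathcal A)}\sum_a r(a)\pi(a)-\eta^{-1}\mathrm{KL}(\pi^{\mathrm{ref}}\|\pi)$. $C^{\pi^*}=\max_a\pi^*(a)/\pi^{\mathrm{ref}}(a)$; $D^2(a)=\sup_{g,h\in\mathcal F}\frac{(g(a)-h(a))^2}{\mathbb E_{a'\sim\pi^{\mathrm{ref}}}[(g(a')-h(a'))^2]}$; $D^2_{\pi^*}=\mathbb E_{a\sim\pi^*}D^2(a)$. $O,\Omega$ hide absolute constants. *)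

theory Defs
  imports "HOL-Analysis.Analysis"
begin

text \<open>Vectors in R^d are represented as functions nat => real; only coordinates i < d matter.
Actions are natural numbers drawn from a finite action set A.\<close>

definition inner_d :: "nat \<Rightarrow> (nat \<Rightarrow> real) \<Rightarrow> (nat \<Rightarrow> real) \<Rightarrow> real" where
  "inner_d d x y = (\<Sum>i<d. x i * y i)"

definition is_vec :: "nat \<Rightarrow> (nat \<Rightarrow> real) \<Rightarrow> bool" where
  "is_vec d x \<longleftrightarrow> (\<forall>i\<ge>d. x i = 0)"

definition is_dist :: "nat set \<Rightarrow> (nat \<Rightarrow> real) \<Rightarrow> bool" where
  "is_dist A p \<longleftrightarrow> (\<forall>a\<in>A. 0 \<le> p a) \<and> (\<forall>a. a \<notin> A \<longrightarrow> p a = 0) \<and> sum p A = 1"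

definition is_pos_dist :: "nat set \<Rightarrow> (nat \<Rightarrow> real) \<Rightarrow> bool" where
  "is_pos_dist A p \<longleftrightarrow> is_dist A p \<and> (\<forall>a\<in>A. 0 < p a)"

definition KL :: "nat set \<Rightarrow> (nat \<Rightarrow> real) \<Rightarrow> (nat \<Rightarrow> real) \<Rightarrow> real" where
  "KL A p q = (\<Sum>a\<in>A. p a * ln (p a / q a))"

definition reg_obj :: "nat set \<Rightarrow> (nat \<Rightarrow> real) \<Rightarrow> (nat \<Rightarrow> real) \<Rightarrow> real \<Rightarrow> (nat \<Rightarrow> real) \<Rightarrow> real" where
  "reg_obj A r pref \<eta> p = (\<Sum>a\<in>A. r a * p a) - KL A pref p / \<eta>"

text \<open>pi is an optimal policy. Policies not of full support have KL(pi_ref||pi) = +infinity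
(pi_ref has full support), so the argmax is over full-support policies.\<close>
definition is_opt_policy :: "nat set \<Rightarrow> (nat \<Rightarrow> real) \<Rightarrow> (nat \<Rightarrow> real) \<Rightarrow> real \<Rightarrow> (nat \<Rightarrow> real) \<Rightarrow> bool" where
  "is_opt_policy A r pref \<eta> p \<longleftrightarrow> is_pos_dist A p \<and>
     (\<forall>q. is_pos_dist A q \<longrightarrow> reg_obj A r pref \<eta> q \<le> reg_obj A r pref \<eta> p)"

definition lin_class :: "nat \<Rightarrow> (nat \<Rightarrow> nat \<Rightarrow> real) \<Rightarrow> (nat \<Rightarrow> real) set \<Rightarrow> (nat \<Rightarrow> real) set" where
  "lin_class d \<phi> \<Theta> = (\<lambda>\<theta>. \<lambda>a. inner_d d \<theta> (\<phi> a)) ` \<Theta>"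

definition conc_coef :: "nat set \<Rightarrow> (nat \<Rightarrow> real) \<Rightarrow> (nat \<Rightarrow> real) \<Rightarrow> real" where
  "conc_coef A pref p = Max ((\<lambda>a. p a / pref a) ` A)"

definition D2 :: "nat set \<Rightarrow> (nat \<Rightarrow> real) set \<Rightarrow> (nat \<Rightarrow> real) \<Rightarrow> nat \<Rightarrow> ereal" where
  "D2 A F pref a = (SUP gh \<in> F \<times> F. ereal ((fst gh a - snd gh a)^2 /
        (\<Sum>a'\<in>A. pref a' * (fst gh a' - snd gh a')^2)))"

definition D2_pi :: "nat set \<Rightarrow> (nat \<Rightarrow> real) set \<Rightarrow> (nat \<Rightarrow> real) \<Rightarrow> (nat \<Rightarrow> real) \<Rightarrow> ereal" where
  "D2_pi A F pref p = (\<Sum>a\<in>A. ereal (p a) * D2 A F pref a)"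

text \<open>A forward-KL-regularized linear bandit instance of dimension d (single context).\<close>
definition is_instance :: "nat \<Rightarrow> nat set \<Rightarrow> (nat \<Rightarrow> nat \<Rightarrow> real) \<Rightarrow> (nat \<Rightarrow> real) set
    \<Rightarrow> (nat \<Rightarrow> real) \<Rightarrow> (nat \<Rightarrow> real) \<Rightarrow> real \<Rightarrow> bool" where
  "is_instance d A \<phi> \<Theta> \<theta>s pref \<eta> \<longleftrightarrow>
     finite A \<and> A \<noteq> {} \<and> (\<forall>a\<in>A. is_vec d (\<phi> a)) \<and> (\<forall>\<theta>\<in>\<Theta>. is_vec d \<theta>) \<and>
     \<theta>s \<in> \<Theta> \<and> (\<forall>a\<in>A. 0 \<le> inner_d d \<theta>s (\<phi> a) \<and> inner_d d \<theta>s (\<phi> a) \<le> 1) \<and>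
     is_pos_dist A pref \<and> \<eta> > 0"

end

theory Submission
  imports Defs
begin

text \<open>
  The instance has \<open>d\<close> one-hot actions and a null action with zero feature; the reference
  policy puts mass \<open>s = 1/(2C)\<close> evenly on the one-hot actions and \<open>1 - s\<close> on the null
  action, and all coordinates of \<open>\<theta>*\<close> equal \<open>2(1 - 2s)/\<eta>\<close>.
  For forward KL, a full-support policy \<open>\<pi>\<close> with \<open>\<pi>_ref(a) = \<eta> (\<nu> - r(a)) \<pi>(a)\<close> for a
  constant \<open>\<nu>\<close> is the unique maximiser: the objective gap to any \<open>q\<close> is then
  \<open>(\<Sum>\<^sub>a \<pi>_ref(a) (ln x\<^sub>a - (x\<^sub>a - 1))) / \<eta>\<close> with \<open>x\<^sub>a = q(a)/\<pi>(a)\<close>, and \<open>ln x \<le> x - 1\<close>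
  with equality only at \<open>x = 1\<close>. With \<open>\<nu> = 2(1 - s)/\<eta>\<close> this identifies \<open>\<pi>*\<close> as
  \<open>1/(2d)\<close> on each one-hot action and \<open>1/2\<close> on the null action, so \<open>C\<^sup>\<pi>\<^sup>* = 1/(2s) = C\<close>.
  Comparing the indicator of a one-hot action with the zero function gives
  \<open>D\<^sup>2(a) \<ge> 1/\<pi>_ref(a) = 2Cd\<close>, hence \<open>D\<^sup>2\<^sub>\<pi>\<^sub>* \<ge> d \<cdot> 1/(2d) \<cdot> 2Cd = Cd\<close>.
\<close>

lemma is_dist_finite: "is_dist A p \<Longrightarrow> finite A"
  unfolding is_dist_def by (metis sum.infinite zero_neq_one)

lemma weighted_sum_ln_le:
  fixes w x :: "'a \<Rightarrow> real"
  assumes "\<forall>a\<in>A. 0 < w a" "\<forall>a\<in>A. 0 < x a"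
  shows "(\<Sum>a\<in>A. w a * ln (x a)) \<le> (\<Sum>a\<in>A. w a * (x a - 1))"
  using assms by (auto intro!: sum_mono mult_left_mono ln_le_minus_one)

lemma weighted_sum_ln_less:
  fixes w x :: "'a \<Rightarrow> real"
  assumes "finite A" "\<forall>a\<in>A. 0 < w a" "\<forall>a\<in>A. 0 < x a" "\<exists>a\<in>A. x a \<noteq> 1"
  shows "(\<Sum>a\<in>A. w a * ln (x a)) < (\<Sum>a\<in>A. w a * (x a - 1))"
proof (rule sum_strict_mono_ex1)
  show "\<forall>a\<in>A. w a * ln (x a) \<le> w a * (x a - 1)"
    using assms by (auto intro!: mult_left_mono ln_le_minus_one)
  from assms(4) obtain a where a: "a \<in> A" "x a \<noteq> 1" by blast
  have "ln (x a) < x a - 1"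
    using ln_le_minus_one[of "x a"] ln_eq_minus_one[of "x a"] a assms(3) by force
  with a assms(2) show "\<exists>a\<in>A. w a * ln (x a) < w a * (x a - 1)" by auto
qed (fact assms(1))

lemma reg_obj_diff_of_stationary:
  assumes pref: "is_pos_dist A pref" and p: "is_pos_dist A p" and q: "is_pos_dist A q"
    and eta: "\<eta> > 0"
    and stationary: "\<And>a. a \<in> A \<Longrightarrow> pref a = \<eta> * (\<nu> - r a) * p a"
  shows "reg_obj A r pref \<eta> q - reg_obj A r pref \<eta> p =
    ((\<Sum>a\<in>A. pref a * ln (q a / p a)) - (\<Sum>a\<in>A. pref a * (q a / p a - 1))) / \<eta>"
proof -
  have pos: "0 < pref a" "0 < p a" "0 < q a" if "a \<in> A" for a
    using that pref p q unfolding is_pos_dist_def by auto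
  have sums: "sum p A = 1" "sum q A = 1"
    using p q unfolding is_pos_dist_def is_dist_def by auto
  have "KL A pref q - KL A pref p = - (\<Sum>a\<in>A. pref a * ln (q a / p a))"
    unfolding KL_def sum_subtractf[symmetric] sum_negf[symmetric]
  proof (intro sum.cong refl)
    fix a assume "a \<in> A"
    then show "pref a * ln (pref a / q a) - pref a * ln (pref a / p a) = - (pref a * ln (q a / p a))"
      using pos[of a] by (simp add: ln_div algebra_simps)
  qed
  then have obj: "reg_obj A r pref \<eta> q - reg_obj A r pref \<eta> p =
      (\<Sum>a\<in>A. r a * (q a - p a)) + (\<Sum>a\<in>A. pref a * ln (q a / p a)) / \<eta>"
    unfolding reg_obj_def by (simp add: sum_subtractf algebra_simps flip: add_divide_distrib)
  have "(\<Sum>a\<in>A. pref a * (q a / p a - 1)) = (\<Sum>a\<in>A. \<eta> * \<nu> * (q a - p a) - \<eta> * (r a * (q a - p a)))"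
  proof (intro sum.cong refl)
    fix a assume "a \<in> A"
    then show "pref a * (q a / p a - 1) = \<eta> * \<nu> * (q a - p a) - \<eta> * (r a * (q a - p a))"
      using pos[of a] by (simp add: stationary field_simps)
  qed
  also have "\<dots> = - \<eta> * (\<Sum>a\<in>A. r a * (q a - p a))"
    by (simp add: sum_subtractf sum_distrib_left[symmetric] sums)
  finally show ?thesis
    using obj eta by (simp add: field_simps)
qed

lemma is_opt_policy_of_stationary:
  assumes "is_pos_dist A pref" "is_pos_dist A p" "\<eta> > 0"
    and "\<And>a. a \<in> A \<Longrightarrow> pref a = \<eta> * (\<nu> - r a) * p a"
  shows "is_opt_policy A r pref \<eta> p"
  unfolding is_opt_policy_def
proof (intro conjI allI impI)
  fix q assume q: "is_pos_dist A q"
  have "(\<Sum>a\<in>A. pref a * ln (q a / p a)) \<le> (\<Sum>a\<in>A. pref a * (q a / p a - 1))"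
    using assms(1,2) q by (intro weighted_sum_ln_le) (auto simp: is_pos_dist_def)
  then show "reg_obj A r pref \<eta> q \<le> reg_obj A r pref \<eta> p"
    using reg_obj_diff_of_stationary[OF assms(1,2) q assms(3,4)] assms(3)
    by (smt (verit) divide_nonpos_pos)
qed fact

lemma is_opt_policy_unique_of_stationary:
  assumes pref: "is_pos_dist A pref" and p: "is_pos_dist A p" and eta: "\<eta> > 0"
    and stationary: "\<And>a. a \<in> A \<Longrightarrow> pref a = \<eta> * (\<nu> - r a) * p a"
    and q_opt: "is_opt_policy A r pref \<eta> q"
  shows "q = p"
proof (rule ccontr)
  assume "q \<noteq> p"
  have q: "is_pos_dist A q" using q_opt by (simp add: is_opt_policy_def)
  have "\<forall>a. a \<notin> A \<longrightarrow> q a = p a"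
    using p q by (simp add: is_pos_dist_def is_dist_def)
  with \<open>q \<noteq> p\<close> obtain a where a: "a \<in> A" "q a \<noteq> p a" by blast
  have "(\<Sum>a\<in>A. pref a * ln (q a / p a)) < (\<Sum>a\<in>A. pref a * (q a / p a - 1))"
  proof (rule weighted_sum_ln_less)
    show "finite A" using pref by (auto simp: is_pos_dist_def intro: is_dist_finite)
    have "p a > 0" using a(1) p by (simp add: is_pos_dist_def)
    with a show "\<exists>a\<in>A. q a / p a \<noteq> 1" by (intro bexI[OF _ a(1)]) simp
  qed (use pref p q in \<open>auto simp: is_pos_dist_def\<close>)
  then have "reg_obj A r pref \<eta> q < reg_obj A r pref \<eta> p"
    using reg_obj_diff_of_stationary[OF pref p q eta stationary] eta
    by (smt (verit) divide_neg_pos)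
  moreover have "reg_obj A r pref \<eta> p \<le> reg_obj A r pref \<eta> q"
    using q_opt p by (simp add: is_opt_policy_def)
  ultimately show False by simp
qed

lemma D2_ge_ratio:
  assumes "g \<in> F" "h \<in> F"
  shows "ereal ((g a - h a)^2 / (\<Sum>a'\<in>A. pref a' * (g a' - h a')^2)) \<le> D2 A F pref a"
  unfolding D2_def using assms by (intro SUP_upper2[of "(g, h)"]) auto

lemma D2_nonneg: "h \<in> F \<Longrightarrow> 0 \<le> D2 A F pref a"
  using D2_ge_ratio[where g = h and h = h and a = a and A = A and pref = pref] by (simp add: zero_ereal_def)

lemma D2_indicator_ge:
  assumes "finite A" "a \<in> A"
    and "(\<lambda>b. if b = a then 1 else 0) \<in> F" "(\<lambda>b. 0) \<in> F"
  shows "ereal (1 / pref a) \<le> D2 A F pref a"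
proof -
  have "(\<Sum>a'\<in>A. pref a' * ((if a' = a then 1 else 0) - 0)\<^sup>2) = (\<Sum>a'\<in>A. if a' = a then pref a else 0)"
    by (intro sum.cong) auto
  also have "\<dots> = pref a" using assms(1,2) by simp
  finally show ?thesis
    using D2_ge_ratio[OF assms(3,4), where a = a and A = A and pref = pref] by simp
qed

lemma D2_pi_ge_sum_ratio:
  assumes "finite A" "B \<subseteq> A" "\<forall>a\<in>A. 0 \<le> p a"
    and "\<forall>a\<in>B. (\<lambda>b. if b = a then 1 else 0) \<in> F" "(\<lambda>b. 0) \<in> F"
  shows "ereal (\<Sum>a\<in>B. p a / pref a) \<le> D2_pi A F pref p"
proof -
  have "ereal (\<Sum>a\<in>B. p a / pref a) = (\<Sum>a\<in>A. ereal (if a \<in> B then p a / pref a else 0))"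
    using assms(1,2) by (simp add: sum.If_cases Int_absorb1)
  also have "\<dots> \<le> (\<Sum>a\<in>A. ereal (p a) * D2 A F pref a)"
  proof (rule sum_mono)
    fix a assume a: "a \<in> A"
    show "ereal (if a \<in> B then p a / pref a else 0) \<le> ereal (p a) * D2 A F pref a"
    proof (cases "a \<in> B")
      case True
      have "ereal (p a) * ereal (1 / pref a) \<le> ereal (p a) * D2 A F pref a"
        using D2_indicator_ge[OF assms(1) a] True assms(3-5) a
        by (intro ereal_mult_left_mono) auto
      with True show ?thesis by simp
    next
      case False
      then show ?thesis
        using D2_nonneg[OF assms(5)] assms(3) a by (simp add: zero_ereal_def[symmetric])
    qed
  qed
  finally show ?thesis unfolding D2_pi_def .
qed

locale hard_instance =
  fixes d :: nat and s \<eta> :: real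
  assumes d_pos: "0 < d" and s_pos: "0 < s" and s_less_half: "s < 1 / 2"
    and eta_ge: "2 * (1 - 2 * s) \<le> \<eta>"
begin

definition actions :: "nat set" where
  "actions = {..d}"

definition feature :: "nat \<Rightarrow> nat \<Rightarrow> real" where
  "feature a = (\<lambda>i. if i = a \<and> a < d then 1 else 0)"

definition reward_level :: real where
  "reward_level = 2 * (1 - 2 * s) / \<eta>"

definition theta_star :: "nat \<Rightarrow> real" where
  "theta_star = (\<lambda>i. if i < d then reward_level else 0)"

definition params :: "(nat \<Rightarrow> real) set" where
  "params = insert theta_star (insert (\<lambda>i. 0) (feature ` {..<d}))"

definition ref_policy :: "nat \<Rightarrow> real" where
  "ref_policy a = (if a < d then s / d else if a = d then 1 - s else 0)"

definition opt_policy :: "nat \<Rightarrow> real" where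
  "opt_policy a = (if a < d then 1 / (2 * d) else if a = d then 1 / 2 else 0)"

lemma eta_pos: "0 < \<eta>"
  using eta_ge s_less_half by (simp add: algebra_simps)

lemma actions_eq: "actions = insert d {..<d}"
  unfolding actions_def by auto

lemma inner_feature: "inner_d d x (feature a) = (if a < d then x a else 0)"
  unfolding inner_d_def feature_def by (cases "a < d") (auto simp: if_distrib cong: if_cong)

lemma reward_eq: "inner_d d theta_star (feature a) = (if a < d then reward_level else 0)"
  by (simp add: inner_feature theta_star_def)

lemma ref_policy_pos_dist: "is_pos_dist actions ref_policy"
  using d_pos s_pos s_less_half
  by (auto simp: is_pos_dist_def is_dist_def actions_eq ref_policy_def)

lemma opt_policy_pos_dist: "is_pos_dist actions opt_policy"
  using d_pos by (auto simp: is_pos_dist_def is_dist_def actions_eq opt_policy_def)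

lemma ref_policy_stationary:
  assumes "a \<in> actions"
  shows "ref_policy a = \<eta> * (2 * (1 - s) / \<eta> - inner_d d theta_star (feature a)) * opt_policy a"
  using assms d_pos eta_pos
  by (auto simp: actions_def reward_eq reward_level_def ref_policy_def opt_policy_def field_simps)

lemma is_instance_hard: "is_instance d actions feature params theta_star ref_policy \<eta>"
  unfolding is_instance_def
proof (intro conjI ref_policy_pos_dist eta_pos)
  have "0 \<le> reward_level" "reward_level \<le> 1"
    using s_less_half eta_ge eta_pos by (auto simp: reward_level_def field_simps)
  then show "\<forall>a\<in>actions. 0 \<le> inner_d d theta_star (feature a) \<and> inner_d d theta_star (feature a) \<le> 1"
    by (simp add: reward_eq)
qed (auto simp: actions_def is_vec_def feature_def params_def theta_star_def)

lemma opt_policy_is_opt: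
  "is_opt_policy actions (\<lambda>a. inner_d d theta_star (feature a)) ref_policy \<eta> opt_policy"
  using ref_policy_pos_dist opt_policy_pos_dist eta_pos ref_policy_stationary
  by (rule is_opt_policy_of_stationary)

lemma is_opt_policy_eq_opt_policy:
  "is_opt_policy actions (\<lambda>a. inner_d d theta_star (feature a)) ref_policy \<eta> p \<Longrightarrow> p = opt_policy"
  using ref_policy_pos_dist opt_policy_pos_dist eta_pos ref_policy_stationary
  by (rule is_opt_policy_unique_of_stationary)

lemma conc_coef_opt_policy: "conc_coef actions ref_policy opt_policy \<le> 1 / (2 * s)"
  unfolding conc_coef_def
proof (subst Max_le_iff; (intro ballI)?)
  have "1 / (2 * (1 - s)) \<le> 1 / (2 * s)"
    using s_pos s_less_half by (intro divide_left_mono) auto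
  then show "x \<le> 1 / (2 * s)" if "x \<in> (\<lambda>a. opt_policy a / ref_policy a) ` actions" for x
    using that d_pos by (auto simp: actions_eq opt_policy_def ref_policy_def)
qed (auto simp: actions_def)

lemma D2_pi_opt_policy:
  "ereal (d / (2 * s)) \<le> D2_pi actions (lin_class d feature params) ref_policy opt_policy"
proof -
  have "(\<lambda>b. if b = a then 1 else 0) \<in> lin_class d feature params" if "a < d" for a
  proof -
    have "(\<lambda>b. inner_d d (feature a) (feature b)) \<in> lin_class d feature params"
      unfolding lin_class_def params_def using that by blast
    moreover have "(\<lambda>b. inner_d d (feature a) (feature b)) = (\<lambda>b. if b = a then 1 else 0)"
      unfolding inner_feature using that by (auto simp: feature_def)
    ultimately show ?thesis by simp
  qed
  moreover have "(\<lambda>b. 0) \<in> lin_class d feature params"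
    using image_eqI[of "\<lambda>b. 0" "\<lambda>\<theta> b. inner_d d \<theta> (feature b)" "\<lambda>i. 0"]
    unfolding lin_class_def params_def by (simp add: inner_d_def)
  ultimately have "ereal (\<Sum>a<d. opt_policy a / ref_policy a)
      \<le> D2_pi actions (lin_class d feature params) ref_policy opt_policy"
    by (intro D2_pi_ge_sum_ratio) (auto simp: actions_def opt_policy_def)
  moreover have "(\<Sum>a<d. opt_policy a / ref_policy a) = d / (2 * s)"
    using d_pos s_pos by (simp add: opt_policy_def ref_policy_def)
  ultimately show ?thesis by simp
qed

end

lemma exists_hard_instance:
  assumes "1 < C" "2 \<le> \<eta>" "0 < d"
  shows "\<exists>A \<phi> \<Theta> \<theta>s pref.
    is_instance d A \<phi> \<Theta> \<theta>s pref \<eta> \<and>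
    (\<exists>p. is_opt_policy A (\<lambda>a. inner_d d \<theta>s (\<phi> a)) pref \<eta> p) \<and>
    (\<forall>p. is_opt_policy A (\<lambda>a. inner_d d \<theta>s (\<phi> a)) pref \<eta> p \<longrightarrow>
       conc_coef A pref p \<le> C \<and>
       ereal (C * real d) \<le> D2_pi A (lin_class d \<phi> \<Theta>) pref p \<and>
       ereal (real d * conc_coef A pref p) \<le> D2_pi A (lin_class d \<phi> \<Theta>) pref p)"
proof -
  interpret hard_instance d "1 / (2 * C)" \<eta>
  proof unfold_locales
    show "2 * (1 - 2 * (1 / (2 * C))) \<le> \<eta>"
      using assms by (smt (verit) divide_pos_pos)
  qed (use assms in \<open>auto simp: field_simps\<close>)
  have conc: "conc_coef actions ref_policy opt_policy \<le> C"
    using conc_coef_opt_policy by simp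
  have D2: "ereal (C * d) \<le> D2_pi actions (lin_class d feature params) ref_policy opt_policy"
    using D2_pi_opt_policy by (simp add: mult.commute)
  have "ereal (d * conc_coef actions ref_policy opt_policy) \<le> ereal (C * d)"
    using mult_left_mono[OF conc, of "real d"] by (simp add: mult.commute)
  also note D2
  finally show ?thesis
    using is_instance_hard opt_policy_is_opt conc D2
    by (intro exI[of _ actions] exI[of _ feature] exI[of _ params] exI[of _ theta_star]
        exI[of _ ref_policy]) (auto dest: is_opt_policy_eq_opt_policy)
qed

theorem propositionB1:
  shows "\<exists>c1>0. \<exists>c2>0. \<exists>c3>0. \<forall>C::real. \<forall>d::nat. \<forall>\<eta>::real.
     C > 1 \<and> odd d \<and> d \<ge> 3 \<and> \<eta> \<ge> 2 \<longrightarrow>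
     (\<exists>A \<phi> \<Theta> \<theta>s pref.
        is_instance d A \<phi> \<Theta> \<theta>s pref \<eta> \<and>
        (\<exists>p. is_opt_policy A (\<lambda>a. inner_d d \<theta>s (\<phi> a)) pref \<eta> p) \<and>
        (\<forall>p. is_opt_policy A (\<lambda>a. inner_d d \<theta>s (\<phi> a)) pref \<eta> p \<longrightarrow>
           conc_coef A pref p \<le> c1 * C \<and>
           D2_pi A (lin_class d \<phi> \<Theta>) pref p \<ge> ereal (c2 * C * real d) \<and>
           D2_pi A (lin_class d \<phi> \<Theta>) pref p \<ge> ereal (c3 * real d * conc_coef A pref p)))"
  by (intro exI[of _ "1::real"] conjI zero_less_one allI impI) (auto intro!: exists_hard_instance)

end
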